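(* Let $d \geq 1$ and $\epsilon \geq 0$, $\kappa > 0$ be real numbers. Let $\mathbf{h}_1, \mathbf{h}_2 \in \mathbb{R}^d$ be two state vectors of an RNN with unit Euclidean norm, and let $\tilde{\mathbf{h}}_1, \tilde{\mathbf{h}}_2 \in \{\pm 1\}^d$ be their saturated versions. Assume the RNN is $\epsilon$-saturated with respect to these states, i.e. $\|\mathbf{h}_i - \tilde{\mathbf{h}}_i\|_2 \leq \epsilon$ for $i \in \{1,2\}$. If $\cos(\mathbf{h}_1, \mathbf{h}_2) \geq 1 - \kappa$ with $$\sqrt{\kappa} < \sqrt{2}\left(\frac{1}{\sqrt{d}} - \epsilon\right),$$ then $\tilde{\mathbf{h}}_1 = \tilde{\mathbf{h}}_2$ (i.e. the two vectors represent the same state of the saturated RNN / DFA).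
   Context: An RNN state vector $\mathbf{h}(x,\theta) \in \mathbb{R}^d$ is viewed as a function of the input string $x$ and the parameter vector $\theta$ of the network (e.g. a simple RNN $\mathbf{h}_{i+1} = \tanh(U\mathbf{h}_i + V\mathbf{x}_{i+1})$). Its saturated version is $\tilde{\mathbf{h}}(x,\theta) = \lim_{\rho \to \infty} \mathbf{h}(x, \rho\theta)$, which for a $\tanh$ RNN takes values in $\{\pm 1\}^d$. Here $\cos(\mathbf{u},\mathbf{v}) = \mathbf{u}^\top \mathbf{v} / (\|\mathbf{u}\|_2 \|\mathbf{v}\|_2)$ denotes cosine similarity. *)

theory Defs
  imports "HOL-Analysis.Analysis"
begin

definition cos_sim :: "real ^ 'n \<Rightarrow> real ^ 'n \<Rightarrow> real" where
  "cos_sim u v = (u \<bullet> v) / (norm u * norm v)"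

definition sign_vector :: "real ^ 'n \<Rightarrow> bool" where
  "sign_vector v \<longleftrightarrow> (\<forall>i. v $ i = 1 \<or> v $ i = -1)"

end

theory Submission
  imports Defs
begin

text \<open>Distinct sign vectors differ by 2 in some coordinate, so they are at distance at least 2.
  The unit states lie within \<open>\<epsilon>\<close> of their saturations and within \<open>sqrt (2 \<kappa>)\<close> of each other,
  and the hypothesis on \<open>\<kappa>\<close> makes \<open>2 \<epsilon> + sqrt (2 \<kappa>) < 2 / sqrt d \<le> 2\<close>; the triangle
  inequality then forces the saturations to coincide.\<close>

lemma sign_vector_dist_ge_2:
  fixes u v :: "real ^ 'n"
  assumes "sign_vector u" and "sign_vector v" and "u \<noteq> v"
  shows "2 \<le> dist u v"
proof -
  obtain i where i: "u $ i \<noteq> v $ i"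
    using \<open>u \<noteq> v\<close> by (metis vec_eq_iff)
  have "u $ i = 1 \<or> u $ i = -1" and "v $ i = 1 \<or> v $ i = -1"
    using assms(1,2) unfolding sign_vector_def by blast+
  with i have "2 = \<bar>(u - v) $ i\<bar>"
    by auto
  also have "\<dots> \<le> norm (u - v)"
    by (rule component_le_norm_cart)
  finally show ?thesis
    by (simp add: dist_norm)
qed

lemma norm_diff_unit_vectors_le:
  fixes u v :: "'a :: real_inner"
  assumes "norm u = 1" and "norm v = 1" and "u \<bullet> v \<ge> 1 - \<kappa>"
  shows "norm (u - v) \<le> sqrt (2 * \<kappa>)"
proof (rule real_le_rsqrt)
  have "(norm (u - v))\<^sup>2 = (norm u)\<^sup>2 + (norm v)\<^sup>2 - 2 * (u \<bullet> v)"
    by (simp add: power2_norm_eq_inner inner_diff_left inner_diff_right inner_commute)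
  then show "(norm (u - v))\<^sup>2 \<le> 2 * \<kappa>"
    using assms by simp
qed

lemma cos_sim_unit_vectors:
  assumes "norm u = 1" and "norm v = 1"
  shows "cos_sim u v = u \<bullet> v"
  using assms by (simp add: cos_sim_def)

theorem proposition1:
  fixes h1 h2 ht1 ht2 :: "real ^ 'n" and \<epsilon> \<kappa> :: real
  assumes "\<epsilon> \<ge> 0" and "\<kappa> > 0"
    and "norm h1 = 1" and "norm h2 = 1"
    and "sign_vector ht1" and "sign_vector ht2"
    and "norm (h1 - ht1) \<le> \<epsilon>" and "norm (h2 - ht2) \<le> \<epsilon>"
    and "cos_sim h1 h2 \<ge> 1 - \<kappa>"
    and "sqrt \<kappa> < sqrt 2 * (1 / sqrt (real CARD('n)) - \<epsilon>)"
  shows "ht1 = ht2"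
proof (rule ccontr)
  assume "ht1 \<noteq> ht2"
  then have far: "2 \<le> dist ht1 ht2"
    using assms(5,6) by (rule sign_vector_dist_ge_2[rotated 2])
  have close: "dist h1 h2 \<le> sqrt (2 * \<kappa>)"
    using assms(3,4,9) by (simp add: dist_norm cos_sim_unit_vectors norm_diff_unit_vectors_le)
  have "dist ht1 ht2 \<le> dist ht1 h1 + dist h1 h2 + dist h2 ht2"
    using dist_triangle[of ht1 ht2 h1] dist_triangle[of h1 ht2 h2] by linarith
  also have "\<dots> \<le> 2 * \<epsilon> + sqrt (2 * \<kappa>)"
    using assms(7,8) close by (simp add: dist_norm norm_minus_commute)
  also have "\<dots> < 2 / sqrt (real CARD('n))"
  proof -
    have "sqrt (2 * \<kappa>) = sqrt 2 * sqrt \<kappa>"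
      by (rule real_sqrt_mult)
    also have "\<dots> < sqrt 2 * (sqrt 2 * (1 / sqrt (real CARD('n)) - \<epsilon>))"
      using assms(10) by simp
    also have "\<dots> = 2 * (1 / sqrt (real CARD('n)) - \<epsilon>)"
      by (simp only: mult.assoc[symmetric] real_sqrt_mult_self)
    finally show ?thesis
      by (simp add: right_diff_distrib)
  qed
  also have "\<dots> \<le> 2"
    using real_sqrt_ge_one[of "real CARD('n)"] by (simp add: divide_le_eq)
  finally show False
    using far by simp
qed

end
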